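(* Let $\Lambda$ be a row-finite $k$-graph with no sources. Suppose $\Lambda$ has no local periodicity at $u\in\Lambda^0$ and that $v\in\Lambda^0$ satisfies $v\le u$. Then $\Lambda$ has no local periodicity at $v$.
   Context: A $k$-graph is a countable category $\Lambda$ with a functor $d:\Lambda\to\mathbb{N}^k$ satisfying the factorization property: whenever $d(\lambda)=m+n$ there are unique $\mu,\nu$ with $\lambda=\mu\nu$, $d(\mu)=m$, $d(\nu)=n$. $\Lambda^n=d^{-1}(n)$, $\Lambda^0$ the vertices, $r,s$ range and source, $v\Lambda=\{\lambda: r(\lambda)=v\}$, $v\Lambda w=\{\lambda: r(\lambda)=v,s(\lambda)=w\}$. Row-finite: each $v\Lambda^n$ finite; no sources: $v\Lambda^{e_i}\ne\emptyset$ for all $v,i$. Write $v\le u$ iff $v\Lambda u\neq\emptyset$. For $0\le m\le n\le d(\lambda)$, $\lambda(m,n)$ is the unique path with $\lambda=\lambda'\lambda(m,n)\lambda''$, $d(\lambda')=m$, $d(\lambda(m,n))=n-m$. $\Lambda$ has no local periodicity at $v$ if for each $m\neq n\in\mathbb{N}^k$ there is $\lambda\in v\Lambda$ with $d(\lambda)\ge m\vee n$ and $\lambda(m,m+d(\lambda)-(m\vee n))\neq\lambda(n,n+d(\lambda)-(m\vee n))$ ($\vee$ = coordinatewise max). *)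

theory Defs
  imports Main "HOL-Library.Countable_Set"
begin

text \<open>Degrees in N^k are represented as functions nat => nat vanishing at indices >= k.
  A k-graph is a small countable category with object set V, morphism set Mor,
  source s, range r, identities ident, composition cmp (cmp f g = fg, defined when
  s f = r g) and a degree functor d.\<close>

definition is_deg :: "nat \<Rightarrow> (nat \<Rightarrow> nat) \<Rightarrow> bool" where
  "is_deg k m \<longleftrightarrow> (\<forall>i\<ge>k. m i = 0)"

definition dadd :: "(nat \<Rightarrow> nat) \<Rightarrow> (nat \<Rightarrow> nat) \<Rightarrow> nat \<Rightarrow> nat" where
  "dadd m n = (\<lambda>i. m i + n i)"

definition dsub :: "(nat \<Rightarrow> nat) \<Rightarrow> (nat \<Rightarrow> nat) \<Rightarrow> nat \<Rightarrow> nat" where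
  "dsub m n = (\<lambda>i. m i - n i)"

definition djoin :: "(nat \<Rightarrow> nat) \<Rightarrow> (nat \<Rightarrow> nat) \<Rightarrow> nat \<Rightarrow> nat" where
  "djoin m n = (\<lambda>i. max (m i) (n i))"

definition unitdeg :: "nat \<Rightarrow> nat \<Rightarrow> nat" where
  "unitdeg i = (\<lambda>j. if j = i then 1 else 0)"

definition is_category ::
  "'v set \<Rightarrow> 'a set \<Rightarrow> ('a \<Rightarrow> 'v) \<Rightarrow> ('a \<Rightarrow> 'v) \<Rightarrow> ('v \<Rightarrow> 'a) \<Rightarrow> ('a \<Rightarrow> 'a \<Rightarrow> 'a) \<Rightarrow> bool" where
  "is_category V Mor r s ident cmp \<longleftrightarrow>
     (\<forall>f\<in>Mor. r f \<in> V \<and> s f \<in> V) \<and>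
     (\<forall>v\<in>V. ident v \<in> Mor \<and> r (ident v) = v \<and> s (ident v) = v) \<and>
     (\<forall>f\<in>Mor. \<forall>g\<in>Mor. s f = r g \<longrightarrow>
        cmp f g \<in> Mor \<and> r (cmp f g) = r f \<and> s (cmp f g) = s g) \<and>
     (\<forall>f\<in>Mor. \<forall>g\<in>Mor. \<forall>h\<in>Mor. s f = r g \<longrightarrow> s g = r h \<longrightarrow>
        cmp (cmp f g) h = cmp f (cmp g h)) \<and>
     (\<forall>f\<in>Mor. cmp (ident (r f)) f = f \<and> cmp f (ident (s f)) = f)"

definition kgraph ::
  "nat \<Rightarrow> 'v set \<Rightarrow> 'a set \<Rightarrow> ('a \<Rightarrow> 'v) \<Rightarrow> ('a \<Rightarrow> 'v) \<Rightarrow> ('v \<Rightarrow> 'a) \<Rightarrow> ('a \<Rightarrow> 'a \<Rightarrow> 'a)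
     \<Rightarrow> ('a \<Rightarrow> nat \<Rightarrow> nat) \<Rightarrow> bool" where
  "kgraph k V Mor r s ident cmp d \<longleftrightarrow>
     is_category V Mor r s ident cmp \<and> countable V \<and> countable Mor \<and>
     (\<forall>f\<in>Mor. is_deg k (d f)) \<and>
     (\<forall>v\<in>V. d (ident v) = (\<lambda>i. 0)) \<and>
     (\<forall>f\<in>Mor. \<forall>g\<in>Mor. s f = r g \<longrightarrow> d (cmp f g) = dadd (d f) (d g)) \<and>
     (\<forall>l\<in>Mor. \<forall>m n. d l = dadd m n \<longrightarrow>
        (\<exists>!p. fst p \<in> Mor \<and> snd p \<in> Mor \<and> s (fst p) = r (snd p) \<and>
              l = cmp (fst p) (snd p) \<and> d (fst p) = m \<and> d (snd p) = n))"

definition row_finite :: "'v set \<Rightarrow> 'a set \<Rightarrow> ('a \<Rightarrow> 'v) \<Rightarrow> ('a \<Rightarrow> nat \<Rightarrow> nat) \<Rightarrow> bool" where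
  "row_finite V Mor r d \<longleftrightarrow> (\<forall>v\<in>V. \<forall>n. finite {l\<in>Mor. r l = v \<and> d l = n})"

definition no_sources :: "nat \<Rightarrow> 'v set \<Rightarrow> 'a set \<Rightarrow> ('a \<Rightarrow> 'v) \<Rightarrow> ('a \<Rightarrow> nat \<Rightarrow> nat) \<Rightarrow> bool" where
  "no_sources k V Mor r d \<longleftrightarrow> (\<forall>v\<in>V. \<forall>i<k. \<exists>l\<in>Mor. r l = v \<and> d l = unitdeg i)"

definition vle :: "'a set \<Rightarrow> ('a \<Rightarrow> 'v) \<Rightarrow> ('a \<Rightarrow> 'v) \<Rightarrow> 'v \<Rightarrow> 'v \<Rightarrow> bool" where
  "vle Mor r s v u \<longleftrightarrow> (\<exists>l\<in>Mor. r l = v \<and> s l = u)"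

definition seg ::
  "'a set \<Rightarrow> ('a \<Rightarrow> 'v) \<Rightarrow> ('a \<Rightarrow> 'v) \<Rightarrow> ('a \<Rightarrow> 'a \<Rightarrow> 'a) \<Rightarrow> ('a \<Rightarrow> nat \<Rightarrow> nat)
     \<Rightarrow> 'a \<Rightarrow> (nat \<Rightarrow> nat) \<Rightarrow> (nat \<Rightarrow> nat) \<Rightarrow> 'a" where
  "seg Mor r s cmp d l m n = (THE mu. \<exists>l1\<in>Mor. \<exists>l2\<in>Mor. mu \<in> Mor \<and>
      s l1 = r mu \<and> s mu = r l2 \<and> l = cmp (cmp l1 mu) l2 \<and>
      d l1 = m \<and> d mu = dsub n m)"

definition no_local_periodicity ::
  "nat \<Rightarrow> 'a set \<Rightarrow> ('a \<Rightarrow> 'v) \<Rightarrow> ('a \<Rightarrow> 'v) \<Rightarrow> ('a \<Rightarrow> 'a \<Rightarrow> 'a) \<Rightarrow> ('a \<Rightarrow> nat \<Rightarrow> nat)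
     \<Rightarrow> 'v \<Rightarrow> bool" where
  "no_local_periodicity k Mor r s cmp d v \<longleftrightarrow>
     (\<forall>m n. is_deg k m \<longrightarrow> is_deg k n \<longrightarrow> m \<noteq> n \<longrightarrow>
       (\<exists>l\<in>Mor. r l = v \<and> djoin m n \<le> d l \<and>
          seg Mor r s cmp d l m (dadd m (dsub (d l) (djoin m n)))
          \<noteq> seg Mor r s cmp d l n (dadd n (dsub (d l) (djoin m n)))))"

end

theory Submission
  imports Defs
begin

text \<open>Let \<mu> \<in> v\<Lambda>u, and for m \<noteq> n let \<nu> \<in> u\<Lambda> witness the absence of local periodicity
  at u. Then \<mu>\<nu> \<in> v\<Lambda> is a witness at v: writing J = m \<or> n and t = d(\<nu>) - J, the two
  segments of \<mu>\<nu> to be compared have length d(\<mu>) + t, and their subsegments from d(\<mu>) to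
  d(\<mu>) + t are \<nu>(m, m + t) and \<nu>(n, n + t), which differ.\<close>

lemma dadd_dsub: "(a::nat \<Rightarrow> nat) \<le> b \<Longrightarrow> dadd a (dsub b a) = b"
  by (auto simp: dadd_def dsub_def le_fun_def)

lemma dadd_commute: "dadd a b = dadd b a"
  by (auto simp: dadd_def)

lemma dadd_left_commute: "dadd a (dadd b c) = dadd b (dadd a c)"
  by (auto simp: dadd_def)

lemma dsub_dadd_cancel: "dsub (dadd a b) a = b"
  by (auto simp: dadd_def dsub_def)

lemma dadd_left_cancel: "dadd a b = dadd a c \<longleftrightarrow> b = c"
  by (auto simp: dadd_def fun_eq_iff)

lemma dadd_le_iff_right: "dadd a b \<le> dadd a c \<longleftrightarrow> b \<le> c"
  by (auto simp: dadd_def le_fun_def)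

lemma le_dadd_left: "a \<le> dadd a b"
  by (auto simp: dadd_def le_fun_def)

lemma dsub_dadd_dadd: "dsub (dadd a c) (dadd a b) = dsub c b"
  by (auto simp: dadd_def dsub_def)

lemma djoin_upper: "m \<le> djoin m n" "n \<le> djoin m n"
  by (auto simp: djoin_def le_fun_def)

lemma dadd_dsub_le:
  assumes "q \<le> J" "J \<le> l"
  shows "dadd q (dsub l J) \<le> l"
proof -
  have "q i + (l i - J i) \<le> l i" for i
    using assms le_funD[OF assms(1), of i] le_funD[OF assms(2), of i] by linarith
  then show ?thesis by (simp add: dadd_def dsub_def le_fun_def)
qed

locale k_graph =
  fixes k :: nat and V :: "'v set" and Mor :: "'a set"
    and r s :: "'a \<Rightarrow> 'v" and ident :: "'v \<Rightarrow> 'a" and cmp :: "'a \<Rightarrow> 'a \<Rightarrow> 'a"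
    and d :: "'a \<Rightarrow> nat \<Rightarrow> nat"
  assumes kgraph: "kgraph k V Mor r s ident cmp d"
begin

abbreviation segment :: "'a \<Rightarrow> (nat \<Rightarrow> nat) \<Rightarrow> (nat \<Rightarrow> nat) \<Rightarrow> 'a" where
  "segment \<equiv> seg Mor r s cmp d"

lemma cmp_closed:
  assumes "f \<in> Mor" "g \<in> Mor" "s f = r g"
  shows "cmp f g \<in> Mor" "r (cmp f g) = r f" "s (cmp f g) = s g"
  using kgraph assms unfolding kgraph_def is_category_def by blast+

lemma cmp_assoc:
  "\<lbrakk>f \<in> Mor; g \<in> Mor; h \<in> Mor; s f = r g; s g = r h\<rbrakk> \<Longrightarrow> cmp (cmp f g) h = cmp f (cmp g h)"
  using kgraph unfolding kgraph_def is_category_def by blast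

lemma deg_cmp: "\<lbrakk>f \<in> Mor; g \<in> Mor; s f = r g\<rbrakk> \<Longrightarrow> d (cmp f g) = dadd (d f) (d g)"
  using kgraph unfolding kgraph_def by blast

lemma factorization:
  "\<lbrakk>l \<in> Mor; d l = dadd m n\<rbrakk> \<Longrightarrow>
     \<exists>!p. fst p \<in> Mor \<and> snd p \<in> Mor \<and> s (fst p) = r (snd p) \<and>
          l = cmp (fst p) (snd p) \<and> d (fst p) = m \<and> d (snd p) = n"
  using kgraph unfolding kgraph_def by blast

lemma factorization_unique:
  assumes "f \<in> Mor" "g \<in> Mor" "s f = r g"
    and "f' \<in> Mor" "g' \<in> Mor" "s f' = r g'"
    and "cmp f' g' = cmp f g" "d f' = d f" "d g' = d g"
  shows "f' = f" "g' = g"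
proof -
  have "cmp f g \<in> Mor" "d (cmp f g) = dadd (d f) (d g)"
    using assms cmp_closed deg_cmp by auto
  from factorization[OF this] have "(f', g') = (f, g)"
    using assms by (metis fst_conv snd_conv)
  then show "f' = f" "g' = g" by simp_all
qed

lemma three_factorization:
  assumes "l \<in> Mor" "a \<le> b" "b \<le> d l"
  obtains l1 x l2 where "l1 \<in> Mor" "x \<in> Mor" "l2 \<in> Mor" "s l1 = r x" "s x = r l2"
    "l = cmp (cmp l1 x) l2" "d l1 = a" "d x = dsub b a"
proof -
  obtain f l2 where f: "f \<in> Mor" "l2 \<in> Mor" "s f = r l2" "l = cmp f l2" "d f = b"
    using ex1_implies_ex[OF factorization[OF \<open>l \<in> Mor\<close> dadd_dsub[OF \<open>b \<le> d l\<close>, symmetric]]]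
    by blast
  obtain l1 x where x: "l1 \<in> Mor" "x \<in> Mor" "s l1 = r x" "f = cmp l1 x"
      "d l1 = a" "d x = dsub b a"
    using ex1_implies_ex[OF factorization[of f a "dsub b a"]] f dadd_dsub[OF \<open>a \<le> b\<close>]
    by fastforce
  have "s x = r l2" using x f cmp_closed(3) by metis
  with f x show thesis using that by blast
qed

text \<open>Uniqueness of the three-fold factorization: the two outer factorizations of l have the same
  degrees, hence coincide, and then so do the inner ones.\<close>

lemma segment_eqI:
  assumes "l1 \<in> Mor" "x \<in> Mor" "l2 \<in> Mor" "s l1 = r x" "s x = r l2"
    and "l = cmp (cmp l1 x) l2" "d l1 = a" "d x = dsub b a" "a \<le> b"
  shows "segment l a b = x"
  unfolding seg_def
proof (rule the_equality)
  fix y assume "\<exists>l1'\<in>Mor. \<exists>l2'\<in>Mor. y \<in> Mor \<and> s l1' = r y \<and> s y = r l2' \<and>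
      l = cmp (cmp l1' y) l2' \<and> d l1' = a \<and> d y = dsub b a"
  then obtain l1' l2' where y: "l1' \<in> Mor" "l2' \<in> Mor" "y \<in> Mor" "s l1' = r y" "s y = r l2'"
      "l = cmp (cmp l1' y) l2'" "d l1' = a" "d y = dsub b a"
    by blast
  have prefix: "cmp l1 x \<in> Mor" "s (cmp l1 x) = r l2" "d (cmp l1 x) = b"
    using assms cmp_closed deg_cmp dadd_dsub by auto
  have prefix': "cmp l1' y \<in> Mor" "s (cmp l1' y) = r l2'" "d (cmp l1' y) = b"
    using y assms cmp_closed deg_cmp dadd_dsub by auto
  have "dadd b (d l2') = dadd b (d l2)"
    using deg_cmp prefix prefix' assms y by metis
  then have "cmp l1' y = cmp l1 x"
    using factorization_unique(1)[OF prefix(1) \<open>l2 \<in> Mor\<close> prefix(2) prefix'(1) y(2) prefix'(2)]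
      prefix prefix' assms y dadd_left_cancel by metis
  then show "y = x"
    using factorization_unique(2) assms y by metis
qed (use assms in blast)

lemma segment_cmp_left:
  assumes "\<mu> \<in> Mor" "l \<in> Mor" "s \<mu> = r l" "a \<le> b" "b \<le> d l"
  shows "segment (cmp \<mu> l) (dadd (d \<mu>) a) (dadd (d \<mu>) b) = segment l a b"
proof -
  obtain l1 x l2 where f: "l1 \<in> Mor" "x \<in> Mor" "l2 \<in> Mor" "s l1 = r x" "s x = r l2"
      "l = cmp (cmp l1 x) l2" "d l1 = a" "d x = dsub b a"
    using three_factorization[OF \<open>l \<in> Mor\<close> \<open>a \<le> b\<close> \<open>b \<le> d l\<close>] by blast
  have "r l = r l1" using f cmp_closed by metis
  then have \<mu>l1: "cmp \<mu> l1 \<in> Mor" "s (cmp \<mu> l1) = r x" "d (cmp \<mu> l1) = dadd (d \<mu>) a"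
    using assms f cmp_closed deg_cmp by auto
  have "cmp \<mu> l = cmp (cmp (cmp \<mu> l1) x) l2"
    using assms f \<open>r l = r l1\<close> cmp_assoc cmp_closed by metis
  then have "segment (cmp \<mu> l) (dadd (d \<mu>) a) (dadd (d \<mu>) b) = x"
    using segment_eqI[OF \<mu>l1(1) f(2,3) \<mu>l1(2) f(5)] \<mu>l1(3) f(8) \<open>a \<le> b\<close>
    by (simp add: dsub_dadd_dadd dadd_le_iff_right)
  moreover have "segment l a b = x" using segment_eqI f \<open>a \<le> b\<close> by blast
  ultimately show ?thesis by simp
qed

lemma segment_segment:
  assumes "l \<in> Mor" "a \<le> b" "b \<le> d l" "c \<le> e" "e \<le> dsub b a"
  shows "segment (segment l a b) c e = segment l (dadd a c) (dadd a e)"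
proof -
  obtain l1 x l2 where f: "l1 \<in> Mor" "x \<in> Mor" "l2 \<in> Mor" "s l1 = r x" "s x = r l2"
      "l = cmp (cmp l1 x) l2" "d l1 = a" "d x = dsub b a"
    using three_factorization[OF \<open>l \<in> Mor\<close> \<open>a \<le> b\<close> \<open>b \<le> d l\<close>] by blast
  obtain y1 z y2 where g: "y1 \<in> Mor" "z \<in> Mor" "y2 \<in> Mor" "s y1 = r z" "s z = r y2"
      "x = cmp (cmp y1 z) y2" "d y1 = c" "d z = dsub e c"
    using three_factorization[OF \<open>x \<in> Mor\<close> \<open>c \<le> e\<close>] assms f by metis
  have "r x = r y1" "s x = s y2" using g cmp_closed by metis+
  then have l1y1: "cmp l1 y1 \<in> Mor" "s (cmp l1 y1) = r z" "d (cmp l1 y1) = dadd a c"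
      and y2l2: "cmp y2 l2 \<in> Mor" "r (cmp y2 l2) = r y2"
    using f g cmp_closed deg_cmp by auto
  have "l = cmp (cmp (cmp l1 y1) z) (cmp y2 l2)"
    using f g \<open>r x = r y1\<close> \<open>s x = s y2\<close> cmp_assoc cmp_closed by metis
  then have "segment l (dadd a c) (dadd a e) = z"
    using segment_eqI[OF l1y1(1) g(2) y2l2(1) l1y1(2)] l1y1(3) g(5,8) y2l2(2) \<open>c \<le> e\<close>
    by (simp add: dsub_dadd_dadd dadd_le_iff_right)
  moreover have "segment l a b = x" "segment x c e = z"
    using segment_eqI f g \<open>a \<le> b\<close> \<open>c \<le> e\<close> by blast+
  ultimately show ?thesis by simp
qed

lemma segment_window_cmp:
  assumes "\<mu> \<in> Mor" "\<nu> \<in> Mor" "s \<mu> = r \<nu>" "q \<le> J" "J \<le> d \<nu>"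
  defines "l \<equiv> cmp \<mu> \<nu>"
  shows "segment (segment l q (dadd q (dsub (d l) J))) (d \<mu>) (dadd (d \<mu>) (dsub (d \<nu>) J))
    = segment \<nu> q (dadd q (dsub (d \<nu>) J))"
proof -
  have dl: "d l = dadd (d \<mu>) (d \<nu>)" unfolding l_def using assms deg_cmp by blast
  have J_le: "J \<le> d l"
    using order_trans[OF \<open>J \<le> d \<nu>\<close> le_dadd_left] by (simp add: dl dadd_commute)
  have window: "dsub (d l) J = dadd (d \<mu>) (dsub (d \<nu>) J)"
    using \<open>J \<le> d \<nu>\<close> by (auto simp: dl dadd_def dsub_def le_fun_def)
  have "l \<in> Mor" unfolding l_def using assms cmp_closed by blast
  have "segment (segment l q (dadd q (dsub (d l) J))) (d \<mu>) (dadd (d \<mu>) (dsub (d \<nu>) J))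
      = segment l (dadd q (d \<mu>)) (dadd q (dadd (d \<mu>) (dsub (d \<nu>) J)))"
    by (rule segment_segment[OF \<open>l \<in> Mor\<close> le_dadd_left dadd_dsub_le[OF \<open>q \<le> J\<close> J_le]
          le_dadd_left]) (simp add: dsub_dadd_cancel window)
  also have "\<dots> = segment l (dadd (d \<mu>) q) (dadd (d \<mu>) (dadd q (dsub (d \<nu>) J)))"
    by (metis dadd_commute dadd_left_commute)
  also have "\<dots> = segment \<nu> q (dadd q (dsub (d \<nu>) J))"
    unfolding l_def using segment_cmp_left assms le_dadd_left dadd_dsub_le by blast
  finally show ?thesis .
qed

lemma no_local_periodicity_source_imp_range:
  assumes "\<mu> \<in> Mor" "no_local_periodicity k Mor r s cmp d (s \<mu>)"
  shows "no_local_periodicity k Mor r s cmp d (r \<mu>)"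
  unfolding no_local_periodicity_def
proof (intro allI impI)
  fix m n :: "nat \<Rightarrow> nat"
  assume "is_deg k m" "is_deg k n" "m \<noteq> n"
  define J where "J = djoin m n"
  obtain \<nu> where \<nu>: "\<nu> \<in> Mor" "r \<nu> = s \<mu>" "J \<le> d \<nu>"
      "segment \<nu> m (dadd m (dsub (d \<nu>) J)) \<noteq> segment \<nu> n (dadd n (dsub (d \<nu>) J))"
    using assms(2) \<open>is_deg k m\<close> \<open>is_deg k n\<close> \<open>m \<noteq> n\<close>
    unfolding no_local_periodicity_def J_def by blast
  define l where "l = cmp \<mu> \<nu>"
  have l: "l \<in> Mor" "r l = r \<mu>" "J \<le> d l"
    using assms \<nu> cmp_closed deg_cmp by (auto simp: l_def dadd_def le_fun_def intro: trans_le_add2)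
  have "segment l m (dadd m (dsub (d l) J)) \<noteq> segment l n (dadd n (dsub (d l) J))"
    using segment_window_cmp[OF assms(1) \<nu>(1)] \<nu> djoin_upper
    unfolding l_def J_def by metis
  with l show "\<exists>l\<in>Mor. r l = r \<mu> \<and> djoin m n \<le> d l \<and>
      segment l m (dadd m (dsub (d l) (djoin m n))) \<noteq> segment l n (dadd n (dsub (d l) (djoin m n)))"
    unfolding J_def by blast
qed

end

theorem lemma3p6:
  fixes k :: nat and V :: "'v set" and Mor :: "'a set"
    and r s :: "'a \<Rightarrow> 'v" and ident :: "'v \<Rightarrow> 'a" and cmp :: "'a \<Rightarrow> 'a \<Rightarrow> 'a"
    and d :: "'a \<Rightarrow> nat \<Rightarrow> nat" and u v :: 'v
  assumes "kgraph k V Mor r s ident cmp d"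
    and "row_finite V Mor r d"
    and "no_sources k V Mor r d"
    and "u \<in> V" and "v \<in> V"
    and "no_local_periodicity k Mor r s cmp d u"
    and "vle Mor r s v u"
  shows "no_local_periodicity k Mor r s cmp d v"
proof -
  interpret k_graph k V Mor r s ident cmp d by (rule k_graph.intro) fact
  obtain \<mu> where "\<mu> \<in> Mor" "r \<mu> = v" "s \<mu> = u"
    using \<open>vle Mor r s v u\<close> unfolding vle_def by blast
  then show ?thesis using no_local_periodicity_source_imp_range \<open>no_local_periodicity k Mor r s cmp d u\<close> by blast
qed

end
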